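(* Let $N,k$ be positive integers, $p_1,\dots,p_N$ primes with all $p_i>3$, and $s_1,\dots,s_N$ positive integers. Then the group $\mathbb{Z}_{p_1^{s_1}\cdots p_N^{s_N}}\mathbin{\mathrm{wr}}\mathbb{Z}^k$ admits an automorphism with finite Reidemeister number.
   Context: $\mathbb{Z}_q\mathbin{\mathrm{wr}}\mathbb{Z}^k=\bigoplus_{x\in\mathbb{Z}^k}(\mathbb{Z}_q)_x\rtimes\mathbb{Z}^k$ is the restricted wreath product with $\mathbb{Z}^k$ acting by shifting indices. The Reidemeister number $R(\varphi)$ of an automorphism $\varphi$ of a group $G$ is the number of equivalence classes of the relation $g_1\sim hg_2\varphi(h^{-1})$, $h\in G$. *)

theory Defs
  imports "HOL-Algebra.Algebra" "HOL-Computational_Algebra.Primes"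
begin

text \<open>The lattice Z^k, realised as integer vectors indexed by nat, vanishing at indices >= k.\<close>
definition zk :: "nat \<Rightarrow> (nat \<Rightarrow> int) set" where
  "zk k = {v. \<forall>i\<ge>k. v i = 0}"

text \<open>Base group: finitely supported functions Z^k -> Z_q (residues represented in {0..<q}).\<close>
definition lamps :: "nat \<Rightarrow> nat \<Rightarrow> ((nat \<Rightarrow> int) \<Rightarrow> int) set" where
  "lamps q k = {f. (\<forall>x. f x \<in> {0..<int q}) \<and> (\<forall>x. x \<notin> zk k \<longrightarrow> f x = 0)
                    \<and> finite {x. f x \<noteq> 0}}"

text \<open>Restricted wreath product Z_q wr Z^k = (direct sum of copies of Z_q) semidirect Z^k,
  Z^k acting by shifting indices: (f,a)(g,b) = (f + a.g, a+b), with (a.g)(x) = g(x-a).\<close>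
definition wreath :: "nat \<Rightarrow> nat \<Rightarrow> (((nat \<Rightarrow> int) \<Rightarrow> int) \<times> (nat \<Rightarrow> int)) monoid" where
  "wreath q k = \<lparr> carrier = lamps q k \<times> zk k,
     monoid.mult = (\<lambda>(f, a) (g, b). (\<lambda>x. (f x + g (\<lambda>i. x i - a i)) mod int q, \<lambda>i. a i + b i)),
     monoid.one = (\<lambda>_. 0, \<lambda>_. 0) \<rparr>"

definition reidemeister_rel :: "('a, 'b) monoid_scheme \<Rightarrow> ('a \<Rightarrow> 'a) \<Rightarrow> ('a \<times> 'a) set" where
  "reidemeister_rel G phi = {(x, y). x \<in> carrier G \<and> y \<in> carrier G \<and>
      (\<exists>h\<in>carrier G. x = h \<otimes>\<^bsub>G\<^esub> y \<otimes>\<^bsub>G\<^esub> phi (inv\<^bsub>G\<^esub> h))}"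

definition reidemeister_classes :: "('a, 'b) monoid_scheme \<Rightarrow> ('a \<Rightarrow> 'a) \<Rightarrow> 'a set set" where
  "reidemeister_classes G phi = carrier G // reidemeister_rel G phi"

end

theory Submission
  imports Defs
begin

text \<open>Let \<open>\<phi>(f, a) = (u \<cdot> f \<circ> (-id), -a)\<close>, which is an automorphism of
  \<open>\<int>\<^sub>q wr \<int>\<^sup>k\<close> whenever \<open>u\<close> is a unit mod \<open>q\<close>. Twisted conjugation by \<open>(0, c)\<close> sends
  \<open>(0, a)\<close> to \<open>(0, a + 2c)\<close>, so only the parity of the \<open>\<int>\<^sup>k\<close>-coordinate matters. Twisted
  conjugation by a pure lamp configuration \<open>(g, 0)\<close> sends \<open>(0, a)\<close> to
  \<open>(g - u \<cdot> g(a - \<cdot>), a)\<close>, and when \<open>1 - u\<^sup>2\<close> is also a unit mod \<open>q\<close> a suitable \<open>g\<close> makes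
  the first component equal to any prescribed \<open>f\<close>. Hence every element is twisted
  conjugate to some \<open>(0, b)\<close> with \<open>b \<in> {0, 1}\<^sup>k\<close>, and \<open>R(\<phi>) \<le> 2\<^sup>k\<close>. When \<open>q\<close> is a
  product of powers of primes \<open>> 3\<close>, the choice \<open>u = 2\<close> works, as \<open>1 - u\<^sup>2 = -3\<close>.\<close>

lemma wreath_carrier [simp]: "carrier (wreath q k) = lamps q k \<times> zk k"
  by (simp add: wreath_def)

lemma wreath_mult [simp]:
  "(f, a) \<otimes>\<^bsub>wreath q k\<^esub> (g, b) = (\<lambda>x. (f x + g (\<lambda>i. x i - a i)) mod int q, \<lambda>i. a i + b i)"
  by (simp add: wreath_def)

lemma wreath_one [simp]: "\<one>\<^bsub>wreath q k\<^esub> = (\<lambda>_. 0, \<lambda>_. 0)"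
  by (simp add: wreath_def)

lemma lamps_pos: "f \<in> lamps q k \<Longrightarrow> q > 0"
  by (auto simp: lamps_def)

lemma lamps_mod [simp]: "f \<in> lamps q k \<Longrightarrow> f x mod int q = f x"
  by (auto simp: lamps_def)

lemma lamps_zero: "q > 0 \<Longrightarrow> (\<lambda>_. 0) \<in> lamps q k"
  by (simp add: lamps_def)

lemma lamps_modI:
  assumes "q > 0" "finite {x. F x \<noteq> 0}" "\<And>x. x \<notin> zk k \<Longrightarrow> F x = 0"
  shows "(\<lambda>x. F x mod int q) \<in> lamps q k"
proof -
  have "{x. F x mod int q \<noteq> 0} \<subseteq> {x. F x \<noteq> 0}" by auto
  then show ?thesis using assms finite_subset by (auto simp: lamps_def)
qed

lemma lamps_add_mod:
  assumes "f \<in> lamps q k" "g \<in> lamps q k"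
  shows "(\<lambda>x. (f x + g x) mod int q) \<in> lamps q k"
proof (rule lamps_modI)
  have "{x. f x + g x \<noteq> 0} \<subseteq> {x. f x \<noteq> 0} \<union> {x. g x \<noteq> 0}" by auto
  then show "finite {x. f x + g x \<noteq> 0}"
    using assms by (auto simp: lamps_def intro: finite_subset)
qed (use assms in \<open>auto simp: lamps_def\<close>)

lemma lamps_scale_mod:
  assumes "f \<in> lamps q k"
  shows "(\<lambda>x. (c * f x) mod int q) \<in> lamps q k"
proof (rule lamps_modI)
  have "{x. c * f x \<noteq> 0} \<subseteq> {x. f x \<noteq> 0}" by auto
  then show "finite {x. c * f x \<noteq> 0}"
    using assms by (auto simp: lamps_def intro: finite_subset)
qed (use assms in \<open>auto simp: lamps_def\<close>)

lemma lamps_comp: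
  assumes "f \<in> lamps q k" "inj t" "\<And>x. x \<notin> zk k \<Longrightarrow> t x \<notin> zk k"
  shows "(\<lambda>x. f (t x)) \<in> lamps q k"
proof -
  have "{x. f (t x) \<noteq> 0} = t -` {x. f x \<noteq> 0}" by auto
  then show ?thesis
    using assms finite_vimageI[of "{x. f x \<noteq> 0}" t] by (auto simp: lamps_def)
qed

lemma lamps_translate: "f \<in> lamps q k \<Longrightarrow> a \<in> zk k \<Longrightarrow> (\<lambda>x. f (\<lambda>i. x i - a i)) \<in> lamps q k"
  by (rule lamps_comp) (auto simp: zk_def inj_def fun_eq_iff)

lemma lamps_reflect: "f \<in> lamps q k \<Longrightarrow> a \<in> zk k \<Longrightarrow> (\<lambda>x. f (\<lambda>i. a i - x i)) \<in> lamps q k"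
  by (rule lamps_comp) (auto simp: zk_def inj_def fun_eq_iff)

lemma wreath_mult_closed:
  assumes "x \<in> carrier (wreath q k)" "y \<in> carrier (wreath q k)"
  shows "x \<otimes>\<^bsub>wreath q k\<^esub> y \<in> carrier (wreath q k)"
  using assms by (auto simp: zk_def intro!: lamps_add_mod lamps_translate)

lemma wreath_left_inverse:
  assumes "(f, a) \<in> carrier (wreath q k)"
  defines "h \<equiv> (\<lambda>x. (- f (\<lambda>i. x i + a i)) mod int q, \<lambda>i. - a i)"
  shows "h \<in> carrier (wreath q k)" "h \<otimes>\<^bsub>wreath q k\<^esub> (f, a) = \<one>\<^bsub>wreath q k\<^esub>"
proof -
  show "h \<in> carrier (wreath q k)"
    using lamps_scale_mod[OF lamps_translate, of f q k "\<lambda>i. - a i" "-1"] assms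
    by (auto simp: h_def zk_def)
  show "h \<otimes>\<^bsub>wreath q k\<^esub> (f, a) = \<one>\<^bsub>wreath q k\<^esub>"
    by (simp add: h_def mod_add_left_eq)
qed

lemma group_wreath: "q > 0 \<Longrightarrow> group (wreath q k)"
proof (rule groupI)
  show "x \<otimes>\<^bsub>wreath q k\<^esub> y \<in> carrier (wreath q k)"
    if "x \<in> carrier (wreath q k)" "y \<in> carrier (wreath q k)" for x y
    using that by (rule wreath_mult_closed)
next
  fix x y z assume "x \<in> carrier (wreath q k)" "y \<in> carrier (wreath q k)" "z \<in> carrier (wreath q k)"
  then obtain f a g b h c where "x = (f, a)" "y = (g, b)" "z = (h, c)" by auto
  moreover have "(\<lambda>i. x i - (a i + b i)) = (\<lambda>i. x i - a i - b i)" for x :: "nat \<Rightarrow> int"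
    by (simp add: algebra_simps)
  ultimately show "x \<otimes>\<^bsub>wreath q k\<^esub> y \<otimes>\<^bsub>wreath q k\<^esub> z = x \<otimes>\<^bsub>wreath q k\<^esub> (y \<otimes>\<^bsub>wreath q k\<^esub> z)"
    by (simp add: add.assoc mod_add_left_eq mod_add_right_eq)
next
  fix x assume "x \<in> carrier (wreath q k)"
  then obtain f a where x: "x = (f, a)" "(f, a) \<in> carrier (wreath q k)" by auto
  then show "\<one>\<^bsub>wreath q k\<^esub> \<otimes>\<^bsub>wreath q k\<^esub> x = x" by auto
  show "\<exists>y\<in>carrier (wreath q k). y \<otimes>\<^bsub>wreath q k\<^esub> x = \<one>\<^bsub>wreath q k\<^esub>"
    using wreath_left_inverse[OF x(2)] x(1) by blast
qed (simp add: lamps_zero zk_def)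

lemma wreath_inv:
  assumes "q > 0" "(f, a) \<in> carrier (wreath q k)"
  shows "inv\<^bsub>wreath q k\<^esub> (f, a) = (\<lambda>x. (- f (\<lambda>i. x i + a i)) mod int q, \<lambda>i. - a i)"
  using group.inv_equality[OF group_wreath] wreath_left_inverse assms by blast

lemma reidemeister_relI:
  assumes "x \<in> carrier G" "y \<in> carrier G" "h \<in> carrier G"
    and "x = h \<otimes>\<^bsub>G\<^esub> y \<otimes>\<^bsub>G\<^esub> phi (inv\<^bsub>G\<^esub> h)"
  shows "(x, y) \<in> reidemeister_rel G phi"
  using assms by (auto simp: reidemeister_rel_def)

lemma (in group) equiv_reidemeister_rel:
  assumes "phi \<in> hom G G"
  shows "equiv (carrier G) (reidemeister_rel G phi)"
proof -
  interpret group_hom G G phi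
    using assms by (simp add: group_hom_def group_hom_axioms_def)
  show ?thesis
  proof (rule equivI)
    show "refl_on (carrier G) (reidemeister_rel G phi)"
    proof (rule refl_onI)
      fix x assume "x \<in> carrier G"
      then have "x = \<one> \<otimes> x \<otimes> phi (inv \<one>)" by simp
      with \<open>x \<in> carrier G\<close> show "(x, x) \<in> reidemeister_rel G phi"
        unfolding reidemeister_rel_def by blast
    qed
    show "sym (reidemeister_rel G phi)"
    proof (rule symI)
      fix x y assume "(x, y) \<in> reidemeister_rel G phi"
      then obtain h where xyh: "x \<in> carrier G" "y \<in> carrier G" "h \<in> carrier G"
        and "x = h \<otimes> y \<otimes> phi (inv h)"
        unfolding reidemeister_rel_def by blast
      then have "y = inv h \<otimes> x \<otimes> phi (inv (inv h))"
        by (simp add: m_assoc) (simp add: m_assoc[symmetric])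
      with xyh show "(y, x) \<in> reidemeister_rel G phi"
        unfolding reidemeister_rel_def by blast
    qed
    show "trans (reidemeister_rel G phi)"
    proof (rule transI)
      fix x y z assume "(x, y) \<in> reidemeister_rel G phi" "(y, z) \<in> reidemeister_rel G phi"
      then obtain h h' where "x \<in> carrier G" "z \<in> carrier G" "h \<in> carrier G" "h' \<in> carrier G"
        and "x = h \<otimes> y \<otimes> phi (inv h)" "y = h' \<otimes> z \<otimes> phi (inv h')"
        unfolding reidemeister_rel_def by blast
      moreover from this have "x = (h \<otimes> h') \<otimes> z \<otimes> phi (inv (h \<otimes> h'))"
        by (simp add: m_assoc inv_mult_group)
      ultimately show "(x, z) \<in> reidemeister_rel G phi"
        unfolding reidemeister_rel_def by blast
    qed
  qed (auto simp: reidemeister_rel_def)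
qed

lemma (in group) finite_reidemeister_classesI:
  assumes "phi \<in> hom G G" "finite S"
    and "\<And>x. x \<in> carrier G \<Longrightarrow> \<exists>s\<in>S. (x, s) \<in> reidemeister_rel G phi"
  shows "finite (reidemeister_classes G phi)"
proof -
  have "reidemeister_classes G phi \<subseteq> (\<lambda>s. reidemeister_rel G phi `` {s}) ` S"
    using assms(3) equiv_class_eq[OF equiv_reidemeister_rel[OF assms(1)]]
    by (fastforce simp: reidemeister_classes_def quotient_def)
  then show ?thesis
    using assms(2) finite_subset by blast
qed

lemma coprime_imp_inverse_mod:
  fixes a m :: int
  assumes "coprime a m"
  obtains b where "a * b mod m = 1 mod m"
proof -
  obtain b c where "b * a + c * m = 1"
    using bezout_int[of a m] assms by auto
  then have "(a * b + m * c) mod m = 1 mod m"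
    by (simp add: algebra_simps)
  then show ?thesis
    using that by simp
qed

definition wreath_twist :: "nat \<Rightarrow> int \<Rightarrow> ((nat \<Rightarrow> int) \<Rightarrow> int) \<times> (nat \<Rightarrow> int) \<Rightarrow> ((nat \<Rightarrow> int) \<Rightarrow> int) \<times> (nat \<Rightarrow> int)"
  where "wreath_twist q u = (\<lambda>(f, a). (\<lambda>x. (u * f (\<lambda>i. - x i)) mod int q, \<lambda>i. - a i))"

lemma wreath_twist_closed:
  "x \<in> carrier (wreath q k) \<Longrightarrow> wreath_twist q u x \<in> carrier (wreath q k)"
  using lamps_reflect[of _ q k "\<lambda>_. 0"]
  by (auto simp: wreath_twist_def zk_def intro!: lamps_scale_mod)

lemma wreath_twist_hom: "wreath_twist q u \<in> hom (wreath q k) (wreath q k)"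
proof (rule homI)
  fix x y assume "x \<in> carrier (wreath q k)" "y \<in> carrier (wreath q k)"
  then obtain f a g b where "x = (f, a)" "y = (g, b)" by auto
  moreover have "(\<lambda>i. - (x i - - a i)) = (\<lambda>i. - x i - a i)" for x :: "nat \<Rightarrow> int"
    by auto
  ultimately show "wreath_twist q u (x \<otimes>\<^bsub>wreath q k\<^esub> y) = wreath_twist q u x \<otimes>\<^bsub>wreath q k\<^esub> wreath_twist q u y"
    by (simp add: wreath_twist_def mod_add_eq mod_mult_right_eq distrib_left)
qed (rule wreath_twist_closed)

lemma wreath_twist_twist:
  assumes "u * u' mod int q = 1 mod int q" "x \<in> carrier (wreath q k)"
  shows "wreath_twist q u' (wreath_twist q u x) = x"
proof -
  obtain f a where x: "x = (f, a)" "f \<in> lamps q k" using assms(2) by auto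
  have "(u' * (u * f y)) mod int q = f y" for y
  proof -
    have "(u' * (u * f y)) mod int q = ((u * u' mod int q) * f y) mod int q"
      by (simp add: mod_mult_left_eq mult.assoc mult.left_commute)
    also have "\<dots> = f y"
      using assms(1) x(2) by (simp add: mod_mult_left_eq)
    finally show ?thesis .
  qed
  then show ?thesis
    using x by (simp add: wreath_twist_def mod_mult_right_eq)
qed

lemma wreath_twist_iso:
  assumes "coprime u (int q)"
  shows "wreath_twist q u \<in> iso (wreath q k) (wreath q k)"
proof -
  obtain u' where u': "u * u' mod int q = 1 mod int q"
    using coprime_imp_inverse_mod assms by blast
  then have "u' * u mod int q = 1 mod int q"
    by (simp add: mult.commute)
  then have "bij_betw (wreath_twist q u) (carrier (wreath q k)) (carrier (wreath q k))"
    using u' by (intro bij_betw_byWitness[where f'="wreath_twist q u'"])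
      (auto simp del: wreath_carrier simp: wreath_twist_twist wreath_twist_closed)
  then show ?thesis
    using wreath_twist_hom by (simp add: iso_def)
qed

lemma wreath_twist_rel_lampless:
  assumes v: "(1 - u\<^sup>2) * v mod int q = 1 mod int q" and fa: "(f, a) \<in> carrier (wreath q k)"
  shows "((f, a), (\<lambda>_. 0, a)) \<in> reidemeister_rel (wreath q k) (wreath_twist q u)"
proof -
  have f: "f \<in> lamps q k" and a: "a \<in> zk k" and q: "q > 0"
    using fa lamps_pos by auto
  interpret group "wreath q k" using group_wreath[OF q] .
  \<comment> \<open>the solution of \<open>g x - u \<cdot> g (a - x) = f x\<close> modulo \<open>q\<close>\<close>
  define g where "g x = (v * (f x + u * f (\<lambda>i. a i - x i))) mod int q" for x
  have g: "g \<in> lamps q k"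
    unfolding g_def
  proof (rule lamps_modI[OF q])
    have f': "(\<lambda>x. f (\<lambda>i. a i - x i)) \<in> lamps q k"
      using f a by (rule lamps_reflect)
    have "{x. v * (f x + u * f (\<lambda>i. a i - x i)) \<noteq> 0} \<subseteq> {x. f x \<noteq> 0} \<union> {x. f (\<lambda>i. a i - x i) \<noteq> 0}"
      by auto
    then show "finite {x. v * (f x + u * f (\<lambda>i. a i - x i)) \<noteq> 0}"
      using f f' by (auto simp: lamps_def intro: finite_subset)
    show "v * (f x + u * f (\<lambda>i. a i - x i)) = 0" if "x \<notin> zk k" for x
      using f f' that by (simp add: lamps_def)
  qed
  have h: "(g, \<lambda>_. 0) \<in> carrier (wreath q k)"
    using g by (simp add: zk_def)
  have "(g x + u * (- g (\<lambda>i. - (x i - a i)) mod int q) mod int q) mod int q = f x" for x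
  proof -
    have "(g x + u * (- g (\<lambda>i. - (x i - a i)) mod int q) mod int q) mod int q
        = (v * (f x + u * f (\<lambda>i. a i - x i)) - u * (v * (f (\<lambda>i. a i - x i) + u * f x))) mod int q"
      by (simp add: g_def mod_simps)
    also have "\<dots> = ((1 - u\<^sup>2) * v * f x) mod int q"
      by (simp add: algebra_simps power2_eq_square)
    also have "\<dots> = f x"
      using v f by (metis lamps_mod mod_mult_left_eq mult_1)
    finally show ?thesis .
  qed
  then have rep: "(f, a) = (g, \<lambda>_. 0) \<otimes>\<^bsub>wreath q k\<^esub> (\<lambda>_. 0, a) \<otimes>\<^bsub>wreath q k\<^esub>
      wreath_twist q u (inv\<^bsub>wreath q k\<^esub> (g, \<lambda>_. 0))"
    using q h g by (simp add: wreath_inv wreath_twist_def fun_eq_iff)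
  moreover have "(\<lambda>_. 0, a) \<in> carrier (wreath q k)"
    using a lamps_zero[OF q] by simp
  ultimately show ?thesis
    using fa h by (intro reidemeister_relI)
qed

lemma wreath_twist_rel_translate:
  assumes "q > 0" "a \<in> zk k" "c \<in> zk k"
  shows "((\<lambda>_. 0, \<lambda>i. a i + 2 * c i), (\<lambda>_. 0, a)) \<in> reidemeister_rel (wreath q k) (wreath_twist q u)"
proof (rule reidemeister_relI)
  show "(\<lambda>_. 0, c) \<in> carrier (wreath q k)" "(\<lambda>_. 0, a) \<in> carrier (wreath q k)"
    "(\<lambda>_. 0, \<lambda>i. a i + 2 * c i) \<in> carrier (wreath q k)"
    using assms lamps_zero by (auto simp: zk_def)
  then show "(\<lambda>_. 0, \<lambda>i. a i + 2 * c i) = (\<lambda>_. 0, c) \<otimes>\<^bsub>wreath q k\<^esub> (\<lambda>_. 0, a) \<otimes>\<^bsub>wreath q k\<^esub>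
      wreath_twist q u (inv\<^bsub>wreath q k\<^esub> (\<lambda>_. 0, c))"
    using assms by (simp add: wreath_inv wreath_twist_def fun_eq_iff)
qed

lemma wreath_twist_rel_parity:
  assumes "coprime (1 - u\<^sup>2) (int q)" and fa: "(f, a) \<in> carrier (wreath q k)"
  shows "((f, a), (\<lambda>_. 0, \<lambda>i. a i mod 2)) \<in> reidemeister_rel (wreath q k) (wreath_twist q u)"
proof -
  have a: "a \<in> zk k" and q: "q > 0"
    using fa lamps_pos by auto
  obtain v where "(1 - u\<^sup>2) * v mod int q = 1 mod int q"
    using coprime_imp_inverse_mod assms(1) by blast
  then have "((f, a), (\<lambda>_. 0, a)) \<in> reidemeister_rel (wreath q k) (wreath_twist q u)"
    using fa by (rule wreath_twist_rel_lampless)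
  moreover have "((\<lambda>_. 0, a), (\<lambda>_. 0, \<lambda>i. a i mod 2)) \<in> reidemeister_rel (wreath q k) (wreath_twist q u)"
    using wreath_twist_rel_translate[OF q, of "\<lambda>i. a i mod 2" k "\<lambda>i. a i div 2"] a
    by (simp add: zk_def)
  moreover have "equiv (carrier (wreath q k)) (reidemeister_rel (wreath q k) (wreath_twist q u))"
    using group.equiv_reidemeister_rel[OF group_wreath[OF q] wreath_twist_hom] .
  ultimately show ?thesis
    by (meson equivE transE)
qed

lemma finite_reidemeister_classes_wreath_twist:
  assumes "coprime (1 - u\<^sup>2) (int q)"
  shows "finite (reidemeister_classes (wreath q k) (wreath_twist q u))"
proof (cases "q = 0")
  case True
  then show ?thesis
    by (simp add: reidemeister_classes_def lamps_def)
next
  case False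
  let ?B = "{b. \<forall>i. (i \<in> {..<k} \<longrightarrow> b i \<in> {0, 1}) \<and> (i \<notin> {..<k} \<longrightarrow> b i = (0::int))}"
  show ?thesis
  proof (rule group.finite_reidemeister_classesI[OF group_wreath wreath_twist_hom])
    show "finite ((\<lambda>b. (\<lambda>_. 0, b)) ` ?B)"
      by (intro finite_imageI finite_set_of_finite_funs) auto
    fix x assume "x \<in> carrier (wreath q k)"
    then obtain f a where "x = (f, a)" "(f, a) \<in> carrier (wreath q k)" "a \<in> zk k"
      by auto
    moreover have "(\<lambda>i. a i mod 2) \<in> ?B" if "a \<in> zk k"
      using that by (auto simp: zk_def)
    ultimately show "\<exists>s\<in>(\<lambda>b. (\<lambda>_. 0, b)) ` ?B. (x, s) \<in> reidemeister_rel (wreath q k) (wreath_twist q u)"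
      using wreath_twist_rel_parity[OF assms] by blast
  qed (use False in simp)
qed

lemma coprime_prod_prime_powers:
  fixes r :: nat
  assumes "Factorial_Ring.prime r"
    and "\<And>i. i \<in> A \<Longrightarrow> Factorial_Ring.prime (p i)" "\<And>i. i \<in> A \<Longrightarrow> p i \<noteq> r"
  shows "coprime r (\<Prod>i\<in>A. p i ^ s i)"
  using assms by (intro prod_coprime_right) (metis coprime_power_right_iff primes_coprime)

theorem proposition4p5:
  fixes N k :: nat and p s :: "nat \<Rightarrow> nat"
  assumes "N \<ge> 1" and "k \<ge> 1"
    and "\<And>i. i < N \<Longrightarrow> Factorial_Ring.prime (p i)"
    and "\<And>i. i < N \<Longrightarrow> p i > 3"
    and "\<And>i. i < N \<Longrightarrow> s i \<ge> 1"
  shows "\<exists>phi. phi \<in> iso (wreath (\<Prod>i<N. p i ^ s i) k) (wreath (\<Prod>i<N. p i ^ s i) k)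
           \<and> finite (reidemeister_classes (wreath (\<Prod>i<N. p i ^ s i) k) phi)"
proof -
  define q where "q = (\<Prod>i<N. p i ^ s i)"
  have coprime_small: "coprime r q" if "Factorial_Ring.prime r" "r \<le> 3" for r
    unfolding q_def using that
    by (intro coprime_prod_prime_powers) (auto simp: assms(3) dest: assms(4))
  have "coprime (2::int) (int q)"
    using coprime_small[of 2] by simp
  moreover have "coprime (1 - 2\<^sup>2::int) (int q)"
    using coprime_small[of 3] coprime_int_iff[of 3 q] by simp
  ultimately show ?thesis
    unfolding q_def[symmetric]
    using wreath_twist_iso finite_reidemeister_classes_wreath_twist by blast
qed

end
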